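(* For all $n,k\in\mathbb{N}$, there is a set $S$ of $n$ polygonal curves in $\mathbb{R}^1$ with $k$ vertices each such that the Voronoi diagram of $S$ under the discrete Fréchet distance has at least $\lfloor n/k\rfloor^k$ Voronoi regions, i.e. there are at least $\lfloor n/k\rfloor^k$ query curves $Q$ (with $k$ vertices in $\mathbb{R}^1$) whose nearest-neighbor sets $N_S(Q)$ are pairwise distinct.
   Context: A polygonal curve in $\mathbb{R}^d$ with $k$ vertices is a sequence $P=(p_1,\dots,p_k)$ of points of $\mathbb{R}^d$. The discrete Fréchet distance between $P=(p_1,\dots,p_k)$ and $Q=(q_1,\dots,q_l)$ is $\min_{C}\max_{(i,j)\in C}\|p_i-q_j\|$, where $C$ ranges over sequences $(i_1,j_1),\dots,(i_t,j_t)$ with $(i_1,j_1)=(1,1)$, $(i_t,j_t)=(k,l)$, and each step $(i_{s+1},j_{s+1})\in\{(i_s+1,j_s),(i_s,j_s+1),(i_s+1,j_s+1)\}$. For a finite set $S$ of curves and a query curve $Q$, $N_S(Q)$ is the set of curves in $S$ at minimum discrete Fréchet distance from $Q$. A Voronoi region of $S$ is a nonempty set of query curves sharing a common nearest-neighbor set $N_S(Q)$. *)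

theory Defs
  imports Main "HOL.Real"
begin

text \<open>Polygonal curves in R^1 are lists of reals; a curve with k vertices is a list of
length k. Indices are 0-based: P = [p_0, ..., p_(k-1)].\<close>

type_synonym curve = "real list"

definition couplings :: "nat \<Rightarrow> nat \<Rightarrow> (nat \<times> nat) list set" where
  "couplings k l = {C. C \<noteq> [] \<and> hd C = (0, 0) \<and> last C = (k - 1, l - 1) \<and>
     (\<forall>s. Suc s < length C \<longrightarrow>
        C ! Suc s \<in> {(fst (C ! s) + 1, snd (C ! s)),
                      (fst (C ! s), snd (C ! s) + 1),
                      (fst (C ! s) + 1, snd (C ! s) + 1)})}"

definition dfd :: "curve \<Rightarrow> curve \<Rightarrow> real" where
  "dfd P Q = Inf {Max ((\<lambda>(i, j). \<bar>P ! i - Q ! j\<bar>) ` set C) | C.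
                   C \<in> couplings (length P) (length Q)}"

definition NN :: "curve set \<Rightarrow> curve \<Rightarrow> curve set" where
  "NN S Q = {P \<in> S. \<forall>P' \<in> S. dfd P Q \<le> dfd P' Q}"

definition voronoi_regions :: "curve set \<Rightarrow> nat \<Rightarrow> curve set set" where
  "voronoi_regions S k =
     {{Q. length Q = k \<and> NN S Q = N} | N. \<exists>Q. length Q = k \<and> NN S Q = N}"

end

theory Submission
  imports Defs
begin

text \<open>A staircase curve, whose j-th vertex is x_j + H j for a large step height H, can only be
  coupled cheaply with another staircase along the diagonal, so the discrete Frechet distance
  of two staircases is the L\<infinity>-distance of their offset vectors x, y \<in> R^k. It therefore
  suffices to exhibit n points of R^k with (n div k)^k distinct L\<infinity> nearest-neighbour sets.
  With m = n div k, the sites form k families of at least m sites on coordinate half-axes inside the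
  hyperplane of vanishing last coordinate, and for each t \<in> {0..m-1}^k there is a query point
  whose nearest sites are exactly the first t_i + 1 sites of the i-th family for every i; so
  the nearest-neighbour set determines t.\<close>

lemma in_set_if_steps_le_Suc:
  fixes xs :: "nat list"
  assumes "xs \<noteq> []" "\<forall>s. Suc s < length xs \<longrightarrow> xs ! Suc s \<le> xs ! s + 1"
    and "hd xs \<le> i" "i \<le> last xs"
  shows "i \<in> set xs"
  using assms
proof (induction xs)
  case Nil
  then show ?case by simp
next
  case (Cons a xs)
  show ?case
  proof (cases "xs = [] \<or> i = a")
    case True
    then show ?thesis using Cons.prems by auto
  next
    case False
    then have "xs \<noteq> []" and "a < i" using Cons.prems(3) by auto
    moreover have "\<forall>s. Suc s < length xs \<longrightarrow> xs ! Suc s \<le> xs ! s + 1"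
      using Cons.prems(2) by (metis Suc_less_eq length_Cons nth_Cons_Suc)
    moreover have "hd xs \<le> a + 1"
      using Cons.prems(2)[rule_format, of 0] \<open>xs \<noteq> []\<close> by (simp add: hd_conv_nth)
    ultimately show ?thesis using Cons.IH Cons.prems(4) by simp
  qed
qed

lemma coupling_step:
  assumes "C \<in> couplings k l" "Suc s < length C"
  shows "fst (C ! s) \<le> fst (C ! Suc s) \<and> fst (C ! Suc s) \<le> fst (C ! s) + 1 \<and>
         snd (C ! s) \<le> snd (C ! Suc s) \<and> snd (C ! Suc s) \<le> snd (C ! s) + 1"
  using assms unfolding couplings_def by auto

lemma coupling_hd_last:
  assumes "C \<in> couplings k l"
  shows "C \<noteq> []" "hd C = (0, 0)" "last C = (k - 1, l - 1)"
  using assms unfolding couplings_def by blast+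

lemma coupling_snd_le:
  assumes "C \<in> couplings k l" "(i, j) \<in> set C"
  shows "j \<le> l - 1"
proof -
  have sorted: "sorted (map snd C)"
    using coupling_step[OF assms(1)] by (simp add: sorted_iff_nth_Suc)
  obtain s where s: "s < length C" "C ! s = (i, j)"
    using assms(2) by (metis in_set_conv_nth)
  have "j = map snd C ! s" using s by simp
  also have "\<dots> \<le> map snd C ! (length C - 1)"
    using sorted s(1) by (intro sorted_nth_mono) auto
  also have "\<dots> = snd (last C)"
    using coupling_hd_last(1)[OF assms(1)] by (simp add: last_conv_nth)
  finally show ?thesis using coupling_hd_last(3)[OF assms(1)] by simp
qed

lemma coupling_covers_fst:
  assumes "C \<in> couplings k l" "i < k"
  shows "\<exists>j. (i, j) \<in> set C"
proof -
  have "i \<in> set (map fst C)"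
  proof (rule in_set_if_steps_le_Suc)
    show "\<forall>s. Suc s < length (map fst C) \<longrightarrow> map fst C ! Suc s \<le> map fst C ! s + 1"
      using coupling_step[OF assms(1)] by simp
  qed (use coupling_hd_last[OF assms(1)] assms(2) in \<open>auto simp: hd_map last_map\<close>)
  then show ?thesis by auto
qed

lemma diagonal_coupling:
  assumes "k \<ge> 1"
  shows "map (\<lambda>j. (j, j)) [0..<k] \<in> couplings k k"
  using assms unfolding couplings_def by (simp add: hd_map last_map)

definition coupling_cost :: "curve \<Rightarrow> curve \<Rightarrow> (nat \<times> nat) list \<Rightarrow> real" where
  "coupling_cost P Q C = Max ((\<lambda>(i, j). \<bar>P ! i - Q ! j\<bar>) ` set C)"

lemma dfd_eq_Inf_coupling_cost:
  "dfd P Q = Inf (coupling_cost P Q ` couplings (length P) (length Q))"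
  unfolding dfd_def coupling_cost_def by (simp add: Setcompr_eq_image)

lemma coupling_cost_ge:
  assumes "(i, j) \<in> set C"
  shows "\<bar>P ! i - Q ! j\<bar> \<le> coupling_cost P Q C"
  unfolding coupling_cost_def using assms by (intro Max_ge) force+

lemma dfd_le_coupling_cost:
  assumes "C \<in> couplings (length P) (length Q)"
  shows "dfd P Q \<le> coupling_cost P Q C"
  unfolding dfd_eq_Inf_coupling_cost
proof (rule cInf_lower)
  show "bdd_below (coupling_cost P Q ` couplings (length P) (length Q))"
  proof (rule bdd_belowI2)
    fix C' assume "C' \<in> couplings (length P) (length Q)"
    then obtain p where "p \<in> set C'"
      using coupling_hd_last(1) by (metis list.set_intros(1) neq_Nil_conv)
    then show "0 \<le> coupling_cost P Q C'"
      using coupling_cost_ge[of "fst p" "snd p"] by (metis abs_ge_zero order_trans prod.collapse)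
  qed
qed (use assms in simp)

lemma le_dfd_if_every_coupling_hits:
  assumes "couplings (length P) (length Q) \<noteq> {}"
    and "\<And>C. C \<in> couplings (length P) (length Q) \<Longrightarrow> \<exists>(i, j) \<in> set C. b \<le> \<bar>P ! i - Q ! j\<bar>"
  shows "b \<le> dfd P Q"
  unfolding dfd_eq_Inf_coupling_cost
proof (rule cINF_greatest)
  fix C assume "C \<in> couplings (length P) (length Q)"
  then obtain i j where "(i, j) \<in> set C" "b \<le> \<bar>P ! i - Q ! j\<bar>"
    using assms(2) by blast
  then show "b \<le> coupling_cost P Q C"
    using coupling_cost_ge by (blast intro: order_trans)
qed (use assms(1) in simp)

definition stair :: "real \<Rightarrow> nat \<Rightarrow> (nat \<Rightarrow> real) \<Rightarrow> curve" where
  "stair H k x = map (\<lambda>j. x j + H * real j) [0..<k]"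

lemma length_stair [simp]: "length (stair H k x) = k"
  by (simp add: stair_def)

lemma nth_stair [simp]: "j < k \<Longrightarrow> stair H k x ! j = x j + H * real j"
  by (simp add: stair_def)

lemma stair_eq_iff: "stair H k x = stair H k y \<longleftrightarrow> (\<forall>j<k. x j = y j)"
  by (auto simp: stair_def)

text \<open>Two vertices on different steps are at least H - 2K apart, which is no less than the
  distance 2K between vertices on the same step; so an optimal coupling might as well be
  diagonal.\<close>
lemma abs_diff_le_dfd_stair:
  assumes "\<forall>j<k. \<bar>x j\<bar> \<le> K \<and> \<bar>y j\<bar> \<le> K" "4 * K \<le> H" "i < k"
  shows "\<bar>x i - y i\<bar> \<le> dfd (stair H k x) (stair H k y)"
proof (rule le_dfd_if_every_coupling_hits)
  show "couplings (length (stair H k x)) (length (stair H k y)) \<noteq> {}"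
    using diagonal_coupling[of k] assms(3) by auto
  fix C assume "C \<in> couplings (length (stair H k x)) (length (stair H k y))"
  then have C: "C \<in> couplings k k" by simp
  obtain l where l: "(i, l) \<in> set C" using coupling_covers_fst[OF C assms(3)] by blast
  have "l < k" using coupling_snd_le[OF C l] assms(3) by linarith
  have "\<bar>x i - y i\<bar> \<le> \<bar>stair H k x ! i - stair H k y ! l\<bar>"
  proof (cases "l = i")
    case False
    then have "1 \<le> \<bar>real i - real l\<bar>" by linarith
    moreover have "0 \<le> H" using assms by force
    ultimately have "H \<le> \<bar>H * (real i - real l)\<bar>"
      by (simp add: abs_mult mult_le_cancel_left1)
    moreover have "\<bar>x i\<bar> \<le> K" "\<bar>y i\<bar> \<le> K" "\<bar>y l\<bar> \<le> K"
      using assms(1,3) \<open>l < k\<close> by auto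
    moreover have "stair H k x ! i - stair H k y ! l = (x i - y l) + H * (real i - real l)"
      using assms(3) \<open>l < k\<close> by (simp add: algebra_simps)
    ultimately show ?thesis using assms(2) by linarith
  qed (use assms(3) in simp)
  then show "\<exists>(i', j) \<in> set C. \<bar>x i - y i\<bar> \<le> \<bar>stair H k x ! i' - stair H k y ! j\<bar>"
    using l by blast
qed

lemma dfd_stair_le_iff:
  assumes "k \<ge> 1" "\<forall>j<k. \<bar>x j\<bar> \<le> K \<and> \<bar>y j\<bar> \<le> K" "4 * K \<le> H"
  shows "dfd (stair H k x) (stair H k y) \<le> r \<longleftrightarrow> (\<forall>j<k. \<bar>x j - y j\<bar> \<le> r)"
proof
  assume "dfd (stair H k x) (stair H k y) \<le> r"
  then show "\<forall>j<k. \<bar>x j - y j\<bar> \<le> r"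
    using abs_diff_le_dfd_stair[OF assms(2,3)] by (blast intro: order_trans)
next
  assume close: "\<forall>j<k. \<bar>x j - y j\<bar> \<le> r"
  let ?D = "map (\<lambda>j. (j, j)) [0..<k]"
  have "dfd (stair H k x) (stair H k y) \<le> coupling_cost (stair H k x) (stair H k y) ?D"
    using diagonal_coupling[OF assms(1)] by (intro dfd_le_coupling_cost) simp
  also have "\<dots> \<le> r"
    unfolding coupling_cost_def using assms(1) close by (subst Max_le_iff) auto
  finally show "dfd (stair H k x) (stair H k y) \<le> r" .
qed

lemma dfd_singleton: "dfd [a] [b] = \<bar>a - b\<bar>"
proof -
  have singleton: "stair (4 * (\<bar>a\<bar> + \<bar>b\<bar>)) 1 (\<lambda>_. c) = [c]" for c
    by (simp add: stair_def)
  have "dfd [a] [b] \<le> r \<longleftrightarrow> \<bar>a - b\<bar> \<le> r" for r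
    using dfd_stair_le_iff[of 1 "\<lambda>_. a" "\<bar>a\<bar> + \<bar>b\<bar>" "\<lambda>_. b" "4 * (\<bar>a\<bar> + \<bar>b\<bar>)" r]
    unfolding singleton by simp
  then show ?thesis by (meson order_antisym order_refl)
qed

lemma NN_eq_if_min_dfd:
  assumes "\<forall>P \<in> S. r \<le> dfd P Q" "\<exists>P \<in> S. dfd P Q \<le> r"
  shows "NN S Q = {P \<in> S. dfd P Q \<le> r}"
  using assms unfolding NN_def by (auto intro: order_trans)

lemma card_le_voronoi_regions:
  assumes "finite S" "\<forall>t \<in> T. length (F t) = k" "inj_on (\<lambda>t. NN S (F t)) T"
  shows "card T \<le> card (voronoi_regions S k)"
proof -
  let ?region = "\<lambda>N. {Q. length Q = k \<and> NN S Q = N}"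
  let ?NNs = "NN S ` {Q. length Q = k}"
  have regions: "voronoi_regions S k = ?region ` ?NNs"
    unfolding voronoi_regions_def by blast
  have "inj_on ?region ?NNs"
    by (rule inj_onI) blast
  have "?NNs \<subseteq> Pow S"
    unfolding NN_def by blast
  then have "finite ?NNs"
    using assms(1) by (simp add: finite_subset)
  have "card T = card ((\<lambda>t. NN S (F t)) ` T)"
    using card_image[OF assms(3)] by simp
  also have "\<dots> \<le> card ?NNs"
    using \<open>finite ?NNs\<close> assms(2) by (intro card_mono) auto
  also have "\<dots> = card (voronoi_regions S k)"
    unfolding regions using card_image[OF \<open>inj_on ?region ?NNs\<close>] by simp
  finally show ?thesis .
qed

lemma voronoi_regions_singleton_curves:
  "\<exists>S :: curve set. finite S \<and> card S = n \<and> (\<forall>P \<in> S. length P = 1) \<and>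
     n \<le> card (voronoi_regions S 1)"
proof -
  define S where "S = (\<lambda>p. [real p]) ` {..<n}"
  have NN_S: "NN S [real q] = {[real q]}" if "q < n" for q
  proof -
    have "NN S [real q] = {P \<in> S. dfd P [real q] \<le> 0}"
      using that by (intro NN_eq_if_min_dfd) (auto simp: S_def dfd_singleton)
    also have "\<dots> = {[real q]}"
      using that by (auto simp: S_def dfd_singleton)
    finally show ?thesis .
  qed
  have "inj_on (\<lambda>q. NN S [real q]) {..<n}"
    by (rule inj_onI) (simp add: NN_S)
  then have "card {..<n} \<le> card (voronoi_regions S 1)"
    by (intro card_le_voronoi_regions) (auto simp: S_def)
  moreover have "card S = n"
    unfolding S_def by (subst card_image) (auto intro: inj_onI)
  ultimately show ?thesis by (intro exI[of _ S]) (auto simp: S_def)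
qed

text \<open>Sites in R^k: for p < (k-1) m the point -(1 + c) e_i with p = i m + c, c < m, and beyond
  that the points (m + 1 + c) e_0. All of them lie in the hyperplane of vanishing last
  coordinate.\<close>
definition site :: "nat \<Rightarrow> nat \<Rightarrow> nat \<Rightarrow> nat \<Rightarrow> real" where
  "site k m p j =
     (if p < (k - 1) * m then (if j = p div m then - (1 + real (p mod m)) else 0)
      else (if j = 0 then real m + 1 + real (p - (k - 1) * m) else 0))"

definition site_index :: "nat \<Rightarrow> nat \<Rightarrow> nat \<Rightarrow> nat \<Rightarrow> nat" where
  "site_index k m i c = (if i < k - 1 then i * m + c else (k - 1) * m + c)"

text \<open>The query point of t is at L\<infinity>-distance at least its radius from every site (look at
  the last coordinate). Its ball contains -(1 + c) e_i iff c \<le> t_i, and (m + 1 + c) e_0 iff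
  c \<le> t_(k-1), because the radius grows with t_(k-1).\<close>
definition radius :: "nat \<Rightarrow> nat \<Rightarrow> nat list \<Rightarrow> real" where
  "radius k m t = (real m + 2 + real (t ! (k - 1)) + real (t ! 0)) / 2"

definition centre :: "nat \<Rightarrow> nat \<Rightarrow> nat list \<Rightarrow> nat \<Rightarrow> real" where
  "centre k m t j = (if j < k - 1 then radius k m t - (1 + real (t ! j)) else radius k m t)"

definition in_query_ball :: "nat \<Rightarrow> nat \<Rightarrow> nat list \<Rightarrow> nat \<Rightarrow> bool" where
  "in_query_ball k m t p \<longleftrightarrow> (\<forall>j<k. \<bar>site k m p j - centre k m t j\<bar> \<le> radius k m t)"

lemma site_site_index:
  assumes "i < k" "c < m"
  shows "site k m (site_index k m i c) j =
           (if i < k - 1 then (if j = i then - (1 + real c) else 0)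
            else (if j = 0 then real m + 1 + real c else 0))"
proof (cases "i < k - 1")
  case True
  have "i * m + c < (i + 1) * m" using assms(2) by simp
  also have "\<dots> \<le> (k - 1) * m" using True by (intro mult_right_mono) auto
  finally show ?thesis using True assms(2) by (simp add: site_def site_index_def)
qed (simp add: site_def site_index_def)

lemma site_index_less:
  assumes "i < k" "c < m"
  shows "site_index k m i c < k * m"
proof -
  have "site_index k m i c < (min i (k - 1) + 1) * m"
    using assms(2) by (simp add: site_index_def)
  also have "\<dots> \<le> k * m" using assms(1) by (intro mult_right_mono) auto
  finally show ?thesis .
qed

lemma site_last:
  assumes "k \<ge> 2"
  shows "site k m p (k - 1) = 0"
proof -
  have "p div m < k - 1" if "p < (k - 1) * m"
    using that by (simp add: less_mult_imp_div_less)
  then show ?thesis using assms by (auto simp: site_def)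
qed

lemma radius_bounds:
  assumes "k \<ge> 1" "\<forall>j<k. t ! j < m"
  shows "real m + 2 \<le> 2 * radius k m t" "2 * radius k m t \<le> 3 * real m"
proof -
  have "t ! (k - 1) < m" "t ! 0 < m" using assms by auto
  then have "real (t ! (k - 1)) + 1 \<le> real m" "real (t ! 0) + 1 \<le> real m" by linarith+
  then show "real m + 2 \<le> 2 * radius k m t" "2 * radius k m t \<le> 3 * real m"
    unfolding radius_def by auto
qed

lemma abs_centre_le_radius:
  assumes "k \<ge> 1" "\<forall>j<k. t ! j < m" "j < k"
  shows "\<bar>centre k m t j\<bar> \<le> radius k m t"
proof -
  have "t ! j < m" using assms(2,3) by simp
  then have "real (t ! j) + 1 \<le> real m" by linarith
  then show ?thesis using radius_bounds[OF assms(1,2)] by (auto simp: centre_def)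
qed

lemma in_query_ball_site_index_iff:
  assumes "k \<ge> 2" "\<forall>j<k. t ! j < m" "i < k" "c < m"
  shows "in_query_ball k m t (site_index k m i c) \<longleftrightarrow> c \<le> t ! i"
proof -
  let ?x = "site k m (site_index k m i c)" and ?r = "radius k m t"
  define i' where "i' = (if i < k - 1 then i else 0)"
  have "i' < k" using assms(1,3) by (simp add: i'_def)
  have "t ! i < m" using assms(2,3) by simp
  then have "real (t ! i) \<le> 2 * ?r"
    using radius_bounds[OF _ assms(2)] assms(1) by linarith
  have "?x i' - centre k m t i' = ?r + real c - real (t ! i) \<or>
        ?x i' - centre k m t i' = real (t ! i) - real c - ?r"
  proof (cases "i < k - 1")
    case False
    then have "?x 0 = real m + 1 + real c" "i = k - 1"
      using assms(3) by (simp_all add: site_site_index[OF assms(3,4)])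
    then show ?thesis
      using assms(1) False by (simp add: i'_def centre_def radius_def field_simps)
  qed (simp add: i'_def site_site_index[OF assms(3,4)] centre_def)
  then have "\<bar>?x i' - centre k m t i'\<bar> \<le> ?r \<longleftrightarrow> c \<le> t ! i"
    using \<open>real (t ! i) \<le> 2 * ?r\<close> by (auto simp: abs_le_iff)
  moreover have "\<bar>?x j - centre k m t j\<bar> \<le> ?r" if "j < k" "j \<noteq> i'" for j
    using that abs_centre_le_radius[OF _ assms(2)] assms(1)
    by (auto simp: i'_def site_site_index[OF assms(3,4)])
  ultimately show ?thesis
    unfolding in_query_ball_def using \<open>i' < k\<close> by blast
qed

lemma abs_site_le:
  assumes "p < n" "m \<le> n"
  shows "\<bar>site k m p j\<bar> \<le> 2 * real n + 1"
proof (cases "p < (k - 1) * m")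
  case True
  then have "p mod m < m" by (cases m) auto
  then show ?thesis using True assms(2) by (auto simp: site_def)
next
  case False
  have "p - (k - 1) * m \<le> n" using assms(1) by linarith
  then show ?thesis using False assms(2) by (auto simp: site_def simp del: of_nat_diff)
qed

lemma site_0_pos_iff: "0 < site k m p 0 \<longleftrightarrow> \<not> p < (k - 1) * m"
  by (auto simp: site_def simp del: of_nat_diff)

lemma site_eqI:
  assumes "k \<ge> 2" "\<forall>j<k. site k m p j = site k m p' j"
  shows "p = p'"
proof -
  have same_side: "p < (k - 1) * m \<longleftrightarrow> p' < (k - 1) * m"
    using assms site_0_pos_iff[of k m] by (metis not_numeral_le_zero not_gr0)
  show ?thesis
  proof (cases "p < (k - 1) * m")
    case True
    let ?i = "p div m"
    have "?i < k - 1" using True by (simp add: less_mult_imp_div_less)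
    then have "site k m p' ?i = site k m p ?i" using assms(2) by simp
    also have "\<dots> = - (1 + real (p mod m))" using True by (simp add: site_def)
    finally have "site k m p' ?i = - (1 + real (p mod m))" .
    moreover have "p' < (k - 1) * m" using True same_side by simp
    ultimately have "p' div m = ?i \<and> p' mod m = p mod m"
      by (auto simp: site_def split: if_splits)
    then show ?thesis by (metis div_mult_mod_eq)
  next
    case False
    have "site k m p 0 = site k m p' 0" using assms by simp
    then have "p - (k - 1) * m = p' - (k - 1) * m"
      using False same_side by (simp add: site_def)
    then show ?thesis using False same_side by simp
  qed
qed

text \<open>All coordinates of sites and query points are bounded by 2 n + 1, whence the step
  height 4 (2 n + 1).\<close>
definition sample_curve :: "nat \<Rightarrow> nat \<Rightarrow> nat \<Rightarrow> curve" where
  "sample_curve n k p = stair (4 * (2 * real n + 1)) k (site k (n div k) p)"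

definition query_curve :: "nat \<Rightarrow> nat \<Rightarrow> nat list \<Rightarrow> curve" where
  "query_curve n k t = stair (4 * (2 * real n + 1)) k (centre k (n div k) t)"

lemma inj_on_sample_curve:
  assumes "k \<ge> 2"
  shows "inj_on (sample_curve n k) {..<n}"
  by (rule inj_onI) (use site_eqI[OF assms] in \<open>auto simp: sample_curve_def stair_eq_iff\<close>)

lemma dfd_sample_query_le_iff:
  assumes "k \<ge> 2" "\<forall>j<k. t ! j < n div k" "p < n"
  shows "dfd (sample_curve n k p) (query_curve n k t) \<le> r \<longleftrightarrow>
           (\<forall>j<k. \<bar>site k (n div k) p j - centre k (n div k) t j\<bar> \<le> r)"
  unfolding sample_curve_def query_curve_def
proof (rule dfd_stair_le_iff)
  have "\<bar>centre k (n div k) t j\<bar> \<le> 2 * real n + 1" if "j < k" for j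
  proof -
    have "real (n div k) \<le> real n" by simp
    then show ?thesis
      using abs_centre_le_radius[OF _ assms(2) that] radius_bounds(2)[OF _ assms(2)] assms(1)
      by linarith
  qed
  then show "\<forall>j<k. \<bar>site k (n div k) p j\<bar> \<le> 2 * real n + 1 \<and>
                   \<bar>centre k (n div k) t j\<bar> \<le> 2 * real n + 1"
    using abs_site_le[OF assms(3)] by simp
qed (use assms(1) in simp_all)

lemma sample_curve_in_NN_iff:
  assumes "k \<ge> 2" "\<forall>j<k. t ! j < n div k" "p < n"
  shows "sample_curve n k p \<in> NN (sample_curve n k ` {..<n}) (query_curve n k t) \<longleftrightarrow>
           in_query_ball k (n div k) t p"
proof -
  let ?S = "sample_curve n k ` {..<n}" and ?r = "radius k (n div k) t"
  have "0 < n div k" using assms(2)[rule_format, of 0] assms(1) by simp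
  then have "in_query_ball k (n div k) t 0"
    using in_query_ball_site_index_iff[OF assms(1,2), of 0 0] assms(1)
    by (simp add: site_index_def)
  then have "\<exists>P \<in> ?S. dfd P (query_curve n k t) \<le> ?r"
    using assms(3) dfd_sample_query_le_iff[OF assms(1,2)] unfolding in_query_ball_def by force
  moreover have "?r \<le> dfd (sample_curve n k q) (query_curve n k t)" if "q < n" for q
  proof -
    have "\<bar>site k (n div k) q (k - 1) - centre k (n div k) t (k - 1)\<bar>
          \<le> dfd (sample_curve n k q) (query_curve n k t)"
      using dfd_sample_query_le_iff[OF assms(1,2) that, THEN iffD1, OF order_refl] assms(1)
      by simp
    then show ?thesis using site_last[OF assms(1), of "n div k" q] by (simp add: centre_def)
  qed
  ultimately have "NN ?S (query_curve n k t) = {P \<in> ?S. dfd P (query_curve n k t) \<le> ?r}"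
    by (intro NN_eq_if_min_dfd) auto
  then show ?thesis
    using assms(3) dfd_sample_query_le_iff[OF assms] by (simp add: in_query_ball_def)
qed

lemma inj_on_NN_query_curve:
  assumes "k \<ge> 2"
  shows "inj_on (\<lambda>t. NN (sample_curve n k ` {..<n}) (query_curve n k t))
           {t. set t \<subseteq> {..<n div k} \<and> length t = k}"
proof (rule inj_onI, rule nth_equalityI)
  fix t t' assume t: "t \<in> {t. set t \<subseteq> {..<n div k} \<and> length t = k}"
    and t': "t' \<in> {t. set t \<subseteq> {..<n div k} \<and> length t = k}"
    and NN_eq: "NN (sample_curve n k ` {..<n}) (query_curve n k t) =
                NN (sample_curve n k ` {..<n}) (query_curve n k t')"
  then show "length t = length t'" by simp
  fix i assume "i < length t"
  then have "i < k" using t by simp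
  have small: "\<forall>j<k. t ! j < n div k" "\<forall>j<k. t' ! j < n div k"
    using t t' by (auto simp: subset_iff)
  have "c \<le> t ! i \<longleftrightarrow> c \<le> t' ! i" if "c < n div k" for c
  proof -
    have "site_index k (n div k) i c < n"
      using site_index_less[OF \<open>i < k\<close> that]
      by (metis div_times_less_eq_dividend mult.commute order_less_le_trans)
    then show ?thesis
      using sample_curve_in_NN_iff[OF assms small(1)] sample_curve_in_NN_iff[OF assms small(2)]
        in_query_ball_site_index_iff[OF assms small(1) \<open>i < k\<close> that]
        in_query_ball_site_index_iff[OF assms small(2) \<open>i < k\<close> that] NN_eq
      by simp
  qed
  then show "t ! i = t' ! i"
    using small \<open>i < k\<close> by (meson le_antisym order_refl)
qed

theorem lemma1:
  fixes n k :: nat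
  assumes "k \<ge> 1"
  shows "\<exists>S :: curve set. finite S \<and> card S = n \<and> (\<forall>P \<in> S. length P = k) \<and>
           (n div k) ^ k \<le> card (voronoi_regions S k)"
proof (cases "k = 1")
  case True
  then show ?thesis using voronoi_regions_singleton_curves[of n] by simp
next
  case False
  with assms have "k \<ge> 2" by simp
  define S where "S = sample_curve n k ` {..<n}"
  let ?T = "{t. set t \<subseteq> {..<n div k} \<and> length t = k}"
  have "(n div k) ^ k = card ?T"
    using card_lists_length_eq[of "{..<n div k}" k] by simp
  also have "\<dots> \<le> card (voronoi_regions S k)"
    unfolding S_def
    by (rule card_le_voronoi_regions[OF _ _ inj_on_NN_query_curve[OF \<open>k \<ge> 2\<close>]])
      (simp_all add: query_curve_def)
  moreover have "card S = n"
    unfolding S_def using card_image[OF inj_on_sample_curve[OF \<open>k \<ge> 2\<close>]] by simp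
  ultimately show ?thesis
    by (intro exI[of _ S]) (auto simp: S_def sample_curve_def)
qed

end
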